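(* Let $U$ be a Hilbert space and $H: U \rightrightarrows U$ a set-valued map with $H^{-1}(0) \neq \emptyset$. For each $i \in \mathbb{N}$ let $\widetilde H_{i+1}: U \rightrightarrows U$ and $M_{i+1}, Z_{i+1} \in \mathcal{L}(U;U)$ with $Z_{i+1}M_{i+1}$ self-adjoint. Let $(u^i)_{i\in\mathbb{N}} \subset U$ satisfy \[ 0 \in \widetilde H_{i+1}(u^{i+1}) + M_{i+1}(u^{i+1}-u^i) \quad (i \in \mathbb{N}). \] Suppose that for every $i \in \mathbb{N}$ there is $\Delta_{i+1} \in \mathbb{R}$ such that for every $q \in \widetilde H_{i+1}(u^{i+1})$, \[ \tfrac{1}{2}\|u^{i+1}-u^i\|_{Z_{i+1}M_{i+1}}^2 + \inf_{u^* \in H^{-1}(0)}\Big( \tfrac12 \|u^{i+1}-u^*\|^2_{Z_{i+1}M_{i+1}} + \langle q, u^{i+1}-u^*\rangle_{Z_{i+1}}\Big) \ge \tfrac12 \operatorname{dist}^2_{Z_{i+2}M_{i+2}}(u^{i+1}, H^{-1}(0)) - \Delta_{i+1}. \] Then for all $N \ge 1$, \[ \tfrac12 \operatorname{dist}^2_{Z_{N+1}M_{N+1}}(u^N, H^{-1}(0)) \le \tfrac12 \operatorname{dist}^2_{Z_1M_1}(u^0, H^{-1}(0)) + \sum_{i=0}^{N-1}\Delta_{i+1}. \]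
   Context: $\mathbb{N}=\{0,1,2,\dots\}$. $\mathcal{L}(U;U)$ denotes bounded linear operators on $U$. For $T \in \mathcal{L}(U;U)$ (not necessarily self-adjoint or positive) write $\langle x, z\rangle_T := \langle Tx, z\rangle$, $\|x\|_T^2 := \langle Tx, x\rangle$, and for $A \subset U$, $\operatorname{dist}^2_T(z, A) := \inf_{u \in A}\|z-u\|_T^2$. $H^{-1}(0) := \{u \in U : 0 \in H(u)\}$. *)

theory Defs
  imports "HOL-Analysis.Analysis"
begin

text \<open>The distance is an infimum which may be
unbounded below, hence it is taken in the extended reals.\<close>

definition inner_op :: "('a::real_inner \<Rightarrow> 'a) \<Rightarrow> 'a \<Rightarrow> 'a \<Rightarrow> real" where
  "inner_op T x z = inner (T x) z"

definition normsq_op :: "('a::real_inner \<Rightarrow> 'a) \<Rightarrow> 'a \<Rightarrow> real" where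
  "normsq_op T x = inner (T x) x"

definition distsq_op :: "('a::real_inner \<Rightarrow> 'a) \<Rightarrow> 'a \<Rightarrow> 'a set \<Rightarrow> ereal" where
  "distsq_op T z A = (INF u\<in>A. ereal (normsq_op T (z - u)))"

definition zeros_of :: "('a::real_inner \<Rightarrow> 'a set) \<Rightarrow> 'a set" where
  "zeros_of H = {u. 0 \<in> H u}"

end

theory Submission
  imports Defs
begin

(* The iteration provides q in Ht_{i+1}(u^{i+1}) with q = -M_{i+1}(u^{i+1} - u^i). For the
   self-adjoint L = Z_{i+1} M_{i+1}, the three-point identity
     |a - b|_L^2 + |a - c|_L^2 - 2 <a - b, a - c>_L = |b - c|_L^2
   with a = u^{i+1}, b = u^i, c = u^* turns the left-hand side of the descent hypothesis into
   exactly 1/2 dist_L^2(u^i, H^{-1}(0)). The hypothesis thus says a_{i+1} <= a_i + Delta_{i+1}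
   for a_i = 1/2 dist^2_{Z_{i+1} M_{i+1}}(u^i, H^{-1}(0)), which telescopes. The distances are
   extended reals; adding a real constant and scaling by a positive one commute with their
   infima because both are monotone bijections of the extended reals. *)

lemma ereal_add_INF:
  fixes f :: "'b \<Rightarrow> ereal"
  shows "ereal c + (INF i\<in>I. f i) = (INF i\<in>I. ereal c + f i)"
proof -
  have "bij ((+) (ereal c))"
    by (rule bij_betw_byWitness[of _ "(+) (ereal (- c))"]) (auto simp: add.assoc[symmetric])
  moreover have "mono ((+) (ereal c))"
    by (simp add: add_left_mono monoI)
  ultimately show ?thesis
    by (simp add: mono_bij_Inf image_comp)
qed

lemma ereal_mult_INF:
  fixes f :: "'b \<Rightarrow> ereal"
  assumes "c > 0"
  shows "ereal c * (INF i\<in>I. f i) = (INF i\<in>I. ereal c * f i)"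
proof -
  have "bij ((*) (ereal c))"
    by (rule bij_betw_byWitness[of _ "\<lambda>x. x / ereal c"])
       (use assms in \<open>auto simp: ereal_mult_divide ereal_divide_eq\<close>)
  moreover have "mono ((*) (ereal c))"
    using assms by (simp add: ereal_mult_left_mono monoI)
  ultimately show ?thesis
    by (simp add: mono_bij_Inf image_comp)
qed

lemma ereal_telescope_le:
  fixes a :: "nat \<Rightarrow> ereal"
  assumes "\<And>i. a (Suc i) \<le> a i + ereal (d i)"
  shows "a n \<le> a 0 + ereal (\<Sum>i<n. d i)"
proof (induction n)
  case 0
  show ?case by simp
next
  case (Suc n)
  have "a (Suc n) \<le> a n + ereal (d n)"
    by (rule assms)
  also have "\<dots> \<le> a 0 + ereal (\<Sum>i<n. d i) + ereal (d n)"
    using Suc.IH by (rule add_right_mono)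
  also have "\<dots> = a 0 + ereal (\<Sum>i<Suc n. d i)"
    by (simp add: add.assoc)
  finally show ?case .
qed

lemma normsq_op_three_point:
  assumes "linear L" and selfadj: "\<And>x y. inner (L x) y = inner x (L y)"
  shows "normsq_op L (a - b) + normsq_op L (a - c) - 2 * inner_op L (a - b) (a - c)
    = normsq_op L (b - c)"
proof -
  have "b - c = (a - c) - (a - b)"
    by simp
  then have "normsq_op L (b - c) = normsq_op L (a - c) - inner (L (a - c)) (a - b)
      - inner_op L (a - b) (a - c) + normsq_op L (a - b)"
    unfolding normsq_op_def inner_op_def
    using linear_diff[OF \<open>linear L\<close>] by (simp add: inner_diff_left inner_diff_right)
  moreover have "inner (L (a - c)) (a - b) = inner_op L (a - b) (a - c)"
    unfolding inner_op_def by (metis selfadj inner_commute)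
  ultimately show ?thesis
    by simp
qed

lemma half_distsq_op_eq_three_point_INF:
  fixes T S :: "'a::real_inner \<Rightarrow> 'a"
  assumes "linear T" "linear (T \<circ> S)"
    and selfadj: "\<And>x y. inner (T (S x)) y = inner x (T (S y))"
    and q: "q + S (v - u) = 0"
  shows "ereal (1/2 * normsq_op (T \<circ> S) (v - u))
      + (INF w\<in>A. ereal (1/2 * normsq_op (T \<circ> S) (v - w) + inner_op T q (v - w)))
    = ereal (1/2) * distsq_op (T \<circ> S) u A"
proof -
  have "inner_op T q (v - w) = - inner_op (T \<circ> S) (v - u) (v - w)" for w
  proof -
    have "q = - S (v - u)"
      using q by (simp add: eq_neg_iff_add_eq_0)
    then show ?thesis
      unfolding inner_op_def using linear_neg[OF \<open>linear T\<close>] by simp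
  qed
  then have pointwise: "ereal (1/2 * normsq_op (T \<circ> S) (v - u))
        + ereal (1/2 * normsq_op (T \<circ> S) (v - w) + inner_op T q (v - w))
      = ereal (1/2) * ereal (normsq_op (T \<circ> S) (u - w))" for w
    using normsq_op_three_point[OF \<open>linear (T \<circ> S)\<close>, of v u w] selfadj by simp
  have half: "(0::real) < 1/2"
    by simp
  show ?thesis
    unfolding ereal_add_INF distsq_op_def ereal_mult_INF[OF half] pointwise ..
qed

theorem theorem3p1:
  fixes H :: "'a::{real_inner, complete_space} \<Rightarrow> 'a set"
    and Ht :: "nat \<Rightarrow> 'a \<Rightarrow> 'a set"
    and M Z :: "nat \<Rightarrow> 'a \<Rightarrow> 'a"
    and u :: "nat \<Rightarrow> 'a"
    and \<Delta> :: "nat \<Rightarrow> real"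
  assumes nonempty: "zeros_of H \<noteq> {}"
    and M_bl: "\<And>i. bounded_linear (M (i + 1))"
    and Z_bl: "\<And>i. bounded_linear (Z (i + 1))"
    and selfadj: "\<And>i x y. inner (Z (i + 1) (M (i + 1) x)) y = inner x (Z (i + 1) (M (i + 1) y))"
    and iter: "\<And>i. 0 \<in> (\<lambda>q. q + M (i + 1) (u (i + 1) - u i)) ` Ht (i + 1) (u (i + 1))"
    and desc: "\<And>i q. q \<in> Ht (i + 1) (u (i + 1)) \<Longrightarrow>
      ereal (1/2 * normsq_op (Z (i + 1) \<circ> M (i + 1)) (u (i + 1) - u i))
      + (INF us\<in>zeros_of H. ereal (1/2 * normsq_op (Z (i + 1) \<circ> M (i + 1)) (u (i + 1) - us)
                                   + inner_op (Z (i + 1)) q (u (i + 1) - us)))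
      \<ge> ereal (1/2) * distsq_op (Z (i + 2) \<circ> M (i + 2)) (u (i + 1)) (zeros_of H) - ereal (\<Delta> (i + 1))"
  shows "\<And>N. N \<ge> 1 \<Longrightarrow>
      ereal (1/2) * distsq_op (Z (N + 1) \<circ> M (N + 1)) (u N) (zeros_of H)
      \<le> ereal (1/2) * distsq_op (Z 1 \<circ> M 1) (u 0) (zeros_of H) + ereal (\<Sum>i<N. \<Delta> (i + 1))"
proof -
  define a where "a n = ereal (1/2) * distsq_op (Z (n + 1) \<circ> M (n + 1)) (u n) (zeros_of H)" for n
  have "a (Suc i) \<le> a i + ereal (\<Delta> (i + 1))" for i
  proof -
    obtain q where "q \<in> Ht (i + 1) (u (i + 1))" and "q + M (i + 1) (u (i + 1) - u i) = 0"
      using iter[of i] by auto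
    moreover have "linear (Z (i + 1))" "linear (Z (i + 1) \<circ> M (i + 1))"
      using M_bl[of i] Z_bl[of i] by (simp_all add: bounded_linear.linear linear_compose)
    ultimately have "a i = ereal (1/2 * normsq_op (Z (i + 1) \<circ> M (i + 1)) (u (i + 1) - u i))
        + (INF us\<in>zeros_of H. ereal (1/2 * normsq_op (Z (i + 1) \<circ> M (i + 1)) (u (i + 1) - us)
                                     + inner_op (Z (i + 1)) q (u (i + 1) - us)))"
      unfolding a_def using selfadj by (intro half_distsq_op_eq_three_point_INF[symmetric])
    then have "a (Suc i) - ereal (\<Delta> (i + 1)) \<le> a i"
      using desc[OF \<open>q \<in> _\<close>] unfolding a_def by (simp add: numeral_2_eq_2)
    then show ?thesis
      by (simp add: ereal_minus_le)
  qed
  then have "a N \<le> a 0 + ereal (\<Sum>i<N. \<Delta> (i + 1))" for N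
    by (rule ereal_telescope_le)
  then show "\<And>N. N \<ge> 1 \<Longrightarrow> ereal (1/2) * distsq_op (Z (N + 1) \<circ> M (N + 1)) (u N) (zeros_of H)
      \<le> ereal (1/2) * distsq_op (Z 1 \<circ> M 1) (u 0) (zeros_of H) + ereal (\<Sum>i<N. \<Delta> (i + 1))"
    unfolding a_def by simp
qed

end
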